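(* For $n\ge1$, the map $$\sigma\mapsto\big(\Delta(\sigma^{(n-1)}),\dots,\Delta(\sigma''),\Delta(\sigma'),\Delta(\sigma)\big)$$ is a bijection from $\mathfrak{S}_n$ onto the set of $n$-chains of Dyck shapes.
   Context: Permutations $\sigma\in\mathfrak{S}_n$ are written as words $\sigma_1\cdots\sigma_n$, with the conventions $\sigma_0=0$, $\sigma_{n+1}=n+1$. A value $\sigma_i$ ($1\le i\le n$) is a peak if $\sigma_{i-1}<\sigma_i>\sigma_{i+1}$, a valley if $\sigma_{i-1}>\sigma_i<\sigma_{i+1}$, a double ascent if $\sigma_{i-1}<\sigma_i<\sigma_{i+1}$, a double descent if $\sigma_{i-1}>\sigma_i>\sigma_{i+1}$. The profile $\Delta(\sigma)$ is the word $w_1\cdots w_{2n}$ over $\{\nearrow,\searrow\}$ where, for each value $j\in\{1,\dots,n\}$, $w_{2j-1}w_{2j}$ is $\nearrow\nearrow$ if $j$ is a valley, $\searrow\searrow$ if $j$ is a peak, $\nearrow\searrow$ if $j$ is a double ascent, $\searrow\nearrow$ if $j$ is a double descent. $\sigma'\in\mathfrak{S}_{n-1}$ is obtained from $\sigma$ by deleting the letter $n$; $\sigma^{(0)}=\sigma$ and $\sigma^{(i+1)}=(\sigma^{(i)})'$, so $\sigma^{(n-i)}\in\mathfrak{S}_i$. A Dyck path of length $2m$ is a lattice path from $(0,0)$ to $(2m,0)$ with steps $\nearrow=(1,1)$, $\searrow=(1,-1)$ never going below the $x$-axis; $P(x)$ denotes its height at abscissa $x$. A cell is a point $(a,b)\in\mathbb{Z}^2$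 with $b\ge0$, $a+b$ even (the tilted square with vertices $(a,b),(a+1,b\pm1),(a+2,b)$). The Dyck shape of $P$ (length $2m$) is $S(P)=\{(a,b): b\ge0,\ a+b\text{ even},\ 0\le a\le 2m-2,\ b+1\le P(a+1)\}$. Cells are adjacent if they differ by $(\pm1,\pm1)$. A ribbon is a nonempty set of cells, connected for adjacency, containing no four cells $(a,b),(a+1,b+1),(a+1,b-1),(a+2,b)$. For Dyck paths $D$ of length $2m$ and $E$ of length $2m+2$, $D\sqsubset E$ means $S(D)\subseteq S(E)$ and $S(E)\setminus S(D)$ is a ribbon. An $n$-chain of Dyck shapes is a sequence $D_1\sqsubset\cdots\sqsubset D_n$ of Dyck paths with $D_i$ of length $2i$. *)

theory Defs
  imports Main
begin

definition perms :: "nat \<Rightarrow> nat list set" where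
  "perms n = {xs. length xs = n \<and> distinct xs \<and> set xs = {1..n}}"

definition sig :: "nat list \<Rightarrow> nat \<Rightarrow> nat" where
  "sig xs i = (if i = 0 then 0 else if i \<le> length xs then xs ! (i - 1) else length xs + 1)"

definition pos :: "nat list \<Rightarrow> nat \<Rightarrow> nat" where
  "pos xs j = (THE i. 1 \<le> i \<and> i \<le> length xs \<and> xs ! (i - 1) = j)"

definition is_peak :: "nat list \<Rightarrow> nat \<Rightarrow> bool" where
  "is_peak xs j = (let i = pos xs j in sig xs (i - 1) < j \<and> j > sig xs (i + 1))"
definition is_valley :: "nat list \<Rightarrow> nat \<Rightarrow> bool" where
  "is_valley xs j = (let i = pos xs j in sig xs (i - 1) > j \<and> j < sig xs (i + 1))"
definition is_dasc :: "nat list \<Rightarrow> nat \<Rightarrow> bool" where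
  "is_dasc xs j = (let i = pos xs j in sig xs (i - 1) < j \<and> j < sig xs (i + 1))"
definition is_ddes :: "nat list \<Rightarrow> nat \<Rightarrow> bool" where
  "is_ddes xs j = (let i = pos xs j in sig xs (i - 1) > j \<and> j > sig xs (i + 1))"

datatype step = Up | Dn

text \<open>The two letters w_(2j-1) w_(2j) of the profile contributed by the value j.\<close>
definition letters :: "nat list \<Rightarrow> nat \<Rightarrow> step list" where
  "letters xs j =
     (if is_valley xs j then [Up, Up]
      else if is_peak xs j then [Dn, Dn]
      else if is_dasc xs j then [Up, Dn]
      else [Dn, Up])"

definition profile :: "nat list \<Rightarrow> step list" where
  "profile xs = concat (map (letters xs) [1..<length xs + 1])"

definition del_max :: "nat list \<Rightarrow> nat list" where
  "del_max xs = filter (\<lambda>x. x \<noteq> length xs) xs"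

text \<open>The map sigma |-> (Delta(sigma^(n-1)), ..., Delta(sigma')), Delta(sigma));
  entry i (0-based) is Delta(sigma^(n-1-i)), which lies in S_(i+1).\<close>
definition profile_chain :: "nat list \<Rightarrow> step list list" where
  "profile_chain xs = map (\<lambda>i. profile ((del_max ^^ (length xs - 1 - i)) xs)) [0..<length xs]"

fun stepval :: "step \<Rightarrow> int" where
  "stepval Up = 1" | "stepval Dn = -1"

definition height :: "step list \<Rightarrow> nat \<Rightarrow> int" where
  "height D x = sum_list (map stepval (take x D))"

definition dyck :: "step list \<Rightarrow> bool" where
  "dyck D = (even (length D) \<and> (\<forall>x \<le> length D. height D x \<ge> 0) \<and> height D (length D) = 0)"

type_synonym cell = "int \<times> int"

definition shape :: "step list \<Rightarrow> cell set" where
  "shape D = {(a, b). b \<ge> 0 \<and> even (a + b) \<and> 0 \<le> a \<and> a \<le> int (length D) - 2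
                      \<and> b + 1 \<le> height D (nat (a + 1))}"

definition adjacent :: "cell \<Rightarrow> cell \<Rightarrow> bool" where
  "adjacent c d = (\<bar>fst c - fst d\<bar> = 1 \<and> \<bar>snd c - snd d\<bar> = 1)"

definition connected_cells :: "cell set \<Rightarrow> bool" where
  "connected_cells R = (\<forall>c\<in>R. \<forall>d\<in>R.
      (c, d) \<in> ({(x, y). x \<in> R \<and> y \<in> R \<and> adjacent x y})\<^sup>*)"

definition ribbon :: "cell set \<Rightarrow> bool" where
  "ribbon R = (R \<noteq> {} \<and> connected_cells R \<and>
      \<not> (\<exists>a b. (a, b) \<in> R \<and> (a + 1, b + 1) \<in> R \<and> (a + 1, b - 1) \<in> R \<and> (a + 2, b) \<in> R))"

definition shape_step :: "step list \<Rightarrow> step list \<Rightarrow> bool" where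
  "shape_step D E = (length E = length D + 2 \<and> shape D \<subseteq> shape E \<and> ribbon (shape E - shape D))"

text \<open>n-chains D_1 \<sqsubset> ... \<sqsubset> D_n; entry i (0-based) is D_(i+1), of length 2(i+1).\<close>
definition chains :: "nat \<Rightarrow> step list list set" where
  "chains n = {Ds. length Ds = n
      \<and> (\<forall>i < n. dyck (Ds ! i) \<and> length (Ds ! i) = 2 * (i + 1))
      \<and> (\<forall>i. i + 1 < n \<longrightarrow> shape_step (Ds ! i) (Ds ! (i + 1)))}"

end

theory Submission
  imports Defs
begin

(* Induction on n, comparing one step on each side.

   Every permutation of [n+1] arises uniquely by inserting n+1 into one of the n+1 gaps k of a
   permutation tau of [n].  This leaves the letters of all values alone except that one down step
   of the profile of tau becomes an up step, and appends the letters of n+1 (an up-down pair at the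
   end, a down-down pair elsewhere).  In other words the new profile is obtained from
   profile tau @ [Dn, Dn] by raising a single down step at a position p <= 2n, and distinct gaps
   give distinct positions p, exhausting the down steps of profile tau @ [Dn].

   On the other side, D is covered by E (D a Dyck path of length 2n) exactly when E arises in this
   way from D @ [Dn, Dn].  Raising step p adds the ribbon of cells sitting directly on the path
   from column p on.  Conversely, containment of shapes, the absence of 2x2 squares and the
   connectivity of the added cells force the heights of E to exceed those of D by 0 before some
   position and by 2 after it, which identifies E. *)

section \<open>Dyck paths and their heights\<close>

lemma height_0 [simp]: "height D 0 = 0"
  by (simp add: height_def)

lemma height_Suc: "x < length D \<Longrightarrow> height D (Suc x) = height D x + stepval (D ! x)"
  by (simp add: height_def take_Suc_conv_app_nth)

lemma height_beyond: "length D \<le> x \<Longrightarrow> height D x = height D (length D)"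
  by (simp add: height_def)

lemma height_append: "x \<le> length D \<Longrightarrow> height (D @ F) x = height D x"
  by (simp add: height_def)

lemma height_append_length: "height (D @ F) (length D + x) = height D (length D) + height F x"
  by (simp add: height_def)

lemma stepval_Up_or_Dn: "stepval s = 1 \<or> stepval s = -1"
  by (cases s) auto

lemma stepval_eq_iff [simp]: "stepval s = stepval t \<longleftrightarrow> s = t"
  by (cases s; cases t) auto

lemma abs_height_Suc_diff: "\<bar>height D (Suc x) - height D x\<bar> \<le> 1"
proof (cases "x < length D")
  case True
  then show ?thesis using stepval_Up_or_Dn[of "D ! x"] by (auto simp: height_Suc)
next
  case False
  then show ?thesis using height_beyond[of D x] height_beyond[of D "Suc x"] by simp
qed

lemma abs_height_Suc_diff_eq: "x < length D \<Longrightarrow> \<bar>height D (Suc x) - height D x\<bar> = 1"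
  using stepval_Up_or_Dn[of "D ! x"] by (auto simp: height_Suc)

lemma even_height_plus: "x \<le> length D \<Longrightarrow> even (height D x + int x)"
proof (induction x)
  case (Suc x)
  have "odd (stepval (D ! x))" by (cases "D ! x") auto
  then show ?case using Suc by (simp add: height_Suc)
qed simp

lemma height_list_update_Up:
  assumes "p < length D" and "D ! p = Dn"
  shows "height (D[p := Up]) x = height D x + (if p < x then 2 else 0)"
proof (induction x)
  case (Suc x)
  show ?case
  proof (cases "x < length D")
    case True
    then show ?thesis using Suc assms by (cases "x = p") (auto simp: height_Suc nth_list_update)
  next
    case False
    then have "height (D[p := Up]) (Suc x) = height (D[p := Up]) x" "height D (Suc x) = height D x"
      by (simp_all add: height_def)
    then show ?thesis using Suc assms(1) False by simp
  qed
qed simp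

lemma heights_eq_imp_eq:
  assumes "length D = length E" and "\<And>x. x \<le> length D \<Longrightarrow> height D x = height E x"
  shows "D = E"
proof (rule nth_equalityI)
  fix t assume "t < length D"
  then have "stepval (D ! t) = stepval (E ! t)"
    using assms height_Suc[of t D] height_Suc[of t E] by simp
  then show "D ! t = E ! t" by simp
qed (fact assms(1))

lemma dyck_Nil: "dyck []"
  by (simp add: dyck_def)

lemma dyck_height_nonneg: "dyck D \<Longrightarrow> 0 \<le> height D x"
  using height_beyond[of D x] by (cases "x \<le> length D") (auto simp: dyck_def)

lemma dyck_height_end [simp]: "dyck D \<Longrightarrow> height D (length D) = 0"
  by (simp add: dyck_def)

lemma dyck_height_before_end:
  assumes "dyck D" and "length D = Suc k"
  shows "height D k = 1"
proof -
  have "0 = height D k + stepval (D ! k)"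
    using assms height_Suc[of k D] dyck_height_end[OF assms(1)] by simp
  then show ?thesis using dyck_height_nonneg[OF assms(1), of k] stepval_Up_or_Dn[of "D ! k"] by auto
qed

lemma dyck_length_2:
  assumes "dyck E" and "length E = 2"
  shows "E = [Up, Dn]"
proof -
  have "height E 1 = 1" "height E 2 = 0"
    using assms dyck_height_before_end[of E 1] dyck_height_end[OF assms(1)] by simp_all
  then have "stepval (E ! 0) = 1" "stepval (E ! 1) = -1"
    using assms(2) height_Suc[of 0 E] height_Suc[of 1 E] by (simp_all add: numeral_2_eq_2)
  then have "E ! 0 = Up" "E ! 1 = Dn" using stepval_eq_iff[of _ Up] stepval_eq_iff[of _ Dn] by simp_all
  then show ?thesis
    using assms(2) by (intro nth_equalityI) (auto simp: less_2_cases_iff)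
qed

lemma height_snoc_Dn_end:
  assumes "dyck D"
  shows "height (D @ [Dn]) (Suc (length D)) = -1"
proof -
  have "height [Dn] 1 = -1" by (simp add: height_def)
  then show ?thesis using height_append_length[of D "[Dn]" 1] assms by simp
qed

lemma mem_shape_diff_iff:
  assumes "length E = length D + 2"
  shows "(a, b) \<in> shape E - shape D \<longleftrightarrow>
    0 \<le> b \<and> even (a + b) \<and> 0 \<le> a \<and> a \<le> int (length D) \<and> b + 1 \<le> height E (nat (a + 1)) \<and>
    \<not> (a \<le> int (length D) - 2 \<and> b + 1 \<le> height D (nat (a + 1)))"
  using assms by (auto simp: shape_def)

lemma adjacent_sym: "adjacent c d \<Longrightarrow> adjacent d c"
  by (simp add: adjacent_def abs_minus_commute)

lemma ribbon_graph:
  fixes f :: "nat \<Rightarrow> int"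
  assumes "a \<le> b" and steps: "\<And>y. a \<le> y \<Longrightarrow> y < b \<Longrightarrow> \<bar>f (Suc y) - f y\<bar> = 1"
  shows "ribbon ((\<lambda>y. (int y, f y)) ` {a..b})"
proof -
  define G where "G = (\<lambda>y. (int y, f y)) ` {a..b}"
  define Adj where "Adj = {(c, d). c \<in> G \<and> d \<in> G \<and> adjacent c d}"
  have to_end: "((int y, f y), (int b, f b)) \<in> Adj\<^sup>*" if "a \<le> y" "y \<le> b" for y
    using that(2)
  proof (induction y rule: inc_induct)
    case (step y)
    have "a \<le> y" using that(1) step.hyps(1) by simp
    then have "(int y, f y) \<in> G" "(int (Suc y), f (Suc y)) \<in> G"
      using step.hyps(2) unfolding G_def
      by (auto intro: image_eqI[where x = y] image_eqI[where x = "Suc y"])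
    then have "((int y, f y), (int (Suc y), f (Suc y))) \<in> Adj"
      using \<open>a \<le> y\<close> step.hyps(2) steps[of y] by (simp add: Adj_def adjacent_def)
    then show ?case using step.IH by (rule converse_rtrancl_into_rtrancl)
  qed simp
  have "sym Adj"
    unfolding sym_def Adj_def using adjacent_sym by blast
  then have sym: "sym (Adj\<^sup>*)" by (rule sym_rtrancl)
  have "connected_cells G"
    unfolding connected_cells_def Adj_def[symmetric]
  proof (intro ballI)
    fix c d assume "c \<in> G" "d \<in> G"
    then have "(c, (int b, f b)) \<in> Adj\<^sup>*" "(d, (int b, f b)) \<in> Adj\<^sup>*"
      using to_end by (auto simp: G_def)
    then show "(c, d) \<in> Adj\<^sup>*" using symD[OF sym] by (meson rtrancl_trans)
  qed
  moreover have "\<not> ((x + 1, y + 1) \<in> G \<and> (x + 1, y - 1) \<in> G)" for x y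
    by (auto simp: G_def)
  then have "\<not> (\<exists>x y. (x, y) \<in> G \<and> (x + 1, y + 1) \<in> G \<and> (x + 1, y - 1) \<in> G \<and> (x + 2, y) \<in> G)"
    by blast
  moreover have "G \<noteq> {}" using assms(1) by (auto simp: G_def)
  ultimately show ?thesis by (simp add: ribbon_def G_def)
qed

section \<open>Adding a ribbon to a Dyck shape\<close>

definition down_steps :: "step list \<Rightarrow> nat set" where
  "down_steps D = {p. p < length D \<and> D ! p = Dn}"

(* For p = length D this is D @ [Up, Dn]. *)
definition grow_at :: "step list \<Rightarrow> nat \<Rightarrow> step list" where
  "grow_at D p = (D @ [Dn, Dn])[p := Up]"

lemma length_grow_at [simp]: "length (grow_at D p) = length D + 2"
  by (simp add: grow_at_def)

lemma nth_grow_at: "t < length D \<Longrightarrow> grow_at D p ! t = (if t = p then Up else D ! t)"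
  by (simp add: grow_at_def nth_list_update nth_append)

lemma inj_on_grow_at: "inj_on (grow_at D) (down_steps (D @ [Dn]))"
proof (rule inj_onI)
  fix p q assume p: "p \<in> down_steps (D @ [Dn])" and q: "q \<in> down_steps (D @ [Dn])"
    and eq: "grow_at D p = grow_at D q"
  have "grow_at D q ! p = Up" using p eq[symmetric] by (simp add: grow_at_def down_steps_def)
  show "p = q"
  proof (rule ccontr)
    assume "p \<noteq> q"
    then have "grow_at D q ! p = (D @ [Dn, Dn]) ! p" by (simp add: grow_at_def)
    also have "\<dots> = Dn" using p by (auto simp: down_steps_def nth_append)
    finally show False using \<open>grow_at D q ! p = Up\<close> by simp
  qed
qed

lemma height_grow_at:
  assumes p: "p \<in> down_steps (D @ [Dn])" and x: "x \<le> Suc (length D)"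
  shows "height (grow_at D p) x = height (D @ [Dn]) x + (if p < x then 2 else 0)"
proof -
  have "height (grow_at D p) x = height (D @ [Dn, Dn]) x + (if p < x then 2 else 0)"
    using p height_list_update_Up[of p "D @ [Dn, Dn]"]
    by (auto simp: grow_at_def down_steps_def nth_append split: if_splits)
  moreover have "height ((D @ [Dn]) @ [Dn]) x = height (D @ [Dn]) x"
    by (rule height_append) (use x in simp)
  ultimately show ?thesis by simp
qed

lemma height_grow_at_end:
  assumes "dyck D" and p: "p \<in> down_steps (D @ [Dn])"
  shows "height (grow_at D p) (length D + 2) = 0"
proof -
  have "p < length D + 2" using p by (simp add: down_steps_def)
  moreover have "height (D @ [Dn, Dn]) (length D + 2) = -2"
  proof -
    have "height [Dn, Dn] 2 = -2" by (simp add: height_def)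
    then show ?thesis using height_append_length[of D "[Dn, Dn]" 2] assms(1) by simp
  qed
  ultimately show ?thesis
    using p height_list_update_Up[of p "D @ [Dn, Dn]"]
    by (auto simp: grow_at_def down_steps_def nth_append split: if_splits)
qed

lemma dyck_grow_at:
  assumes "dyck D" and p: "p \<in> down_steps (D @ [Dn])"
  shows "dyck (grow_at D p)"
  unfolding dyck_def
proof (intro conjI allI impI)
  have "p \<le> length D" using p by (simp add: down_steps_def)
  show "even (length (grow_at D p))" using assms(1) by (simp add: dyck_def)
  show "height (grow_at D p) (length (grow_at D p)) = 0" using height_grow_at_end[OF assms] by simp
  fix x assume "x \<le> length (grow_at D p)"
  then have "x \<le> length D + 2" by simp
  then consider "x \<le> length D" | "x = Suc (length D)" | "x = length D + 2" by linarith
  then show "0 \<le> height (grow_at D p) x"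
  proof cases
    case 1
    then show ?thesis
      using height_grow_at[OF p, of x] dyck_height_nonneg[OF assms(1), of x] by (simp add: height_append)
  next
    case 2
    then show ?thesis
      using height_grow_at[OF p, of x] height_snoc_Dn_end[OF assms(1)] \<open>p \<le> length D\<close> by simp
  qed (use height_grow_at_end[OF assms] in simp)
qed

lemma shape_subset_grow_at:
  assumes p: "p \<in> down_steps (D @ [Dn])"
  shows "shape D \<subseteq> shape (grow_at D p)"
proof
  fix c assume c: "c \<in> shape D"
  then obtain a b where ab: "c = (a, b)" and "nat (a + 1) \<le> length D"
    by (cases c) (auto simp: shape_def)
  then show "c \<in> shape (grow_at D p)"
    using c height_grow_at[OF p, of "nat (a + 1)"] by (auto simp: shape_def height_append)
qed

definition added_ribbon :: "step list \<Rightarrow> nat \<Rightarrow> cell set" where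
  "added_ribbon D p = (\<lambda>y. (int y, height (D @ [Dn]) (Suc y) + 1)) ` {p..length D}"

lemma ribbon_added_ribbon: "p \<in> down_steps (D @ [Dn]) \<Longrightarrow> ribbon (added_ribbon D p)"
  unfolding added_ribbon_def
  by (intro ribbon_graph) (auto simp: down_steps_def intro: abs_height_Suc_diff_eq)

lemma shape_grow_at_diff_subset:
  assumes "dyck D" and p: "p \<in> down_steps (D @ [Dn])"
  shows "shape (grow_at D p) - shape D \<subseteq> added_ribbon D p"
proof
  define n where "n = length D"
  define h where "h y = height (D @ [Dn]) (Suc y)" for y
  have h: "h y = height D (Suc y)" if "Suc y \<le> n" for y
    using that by (simp add: h_def n_def height_append)
  have h_end: "h n = -1" using height_snoc_Dn_end[OF assms(1)] by (simp add: h_def n_def)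
  fix c assume "c \<in> shape (grow_at D p) - shape D"
  then obtain a b where c: "c = (a, b)" and mem: "0 \<le> b" "even (a + b)" "0 \<le> a" "a \<le> int n"
    "b + 1 \<le> height (grow_at D p) (nat (a + 1))" "\<not> (a \<le> int n - 2 \<and> b + 1 \<le> height D (nat (a + 1)))"
    using mem_shape_diff_iff[OF length_grow_at] by (cases c) (auto simp: n_def)
  define y where "y = nat a"
  have a: "a = int y" "nat (a + 1) = Suc y" and y: "y \<le> n"
    using mem by (auto simp: y_def)
  have lower: "h y \<le> b"
  proof (cases "y + 2 \<le> n")
    case True
    then show ?thesis using mem(6) a h[of y] by auto
  next
    case False
    then have "Suc y = n \<or> y = n" using y by auto
    then show ?thesis using h[of y] h_end assms(1) mem(1) by (auto simp: n_def)
  qed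
  have upper: "b + 1 \<le> h y + (if p \<le> y then 2 else 0)"
    using mem(5) a height_grow_at[OF p, of "Suc y"] y by (simp add: h_def n_def less_Suc_eq_le)
  then have "p \<le> y" using lower by (auto split: if_splits)
  have "even (h y + int y + 1)" "even (int y + b)"
    using even_height_plus[of "Suc y" "D @ [Dn]"] y mem(2) a by (simp_all add: h_def n_def)
  then have "b = h y + 1"
    using lower upper \<open>p \<le> y\<close> by presburger
  then show "c \<in> added_ribbon D p" using c a y \<open>p \<le> y\<close> by (auto simp: added_ribbon_def h_def n_def)
qed

lemma added_ribbon_subset:
  assumes "dyck D" and p: "p \<in> down_steps (D @ [Dn])"
  shows "added_ribbon D p \<subseteq> shape (grow_at D p) - shape D"
proof
  fix c assume "c \<in> added_ribbon D p"
  then obtain y where c: "c = (int y, height (D @ [Dn]) (Suc y) + 1)" and y: "p \<le> y" "y \<le> length D"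
    by (auto simp: added_ribbon_def)
  have "even (height (D @ [Dn]) (Suc y) + int y + 1)"
    using even_height_plus[of "Suc y" "D @ [Dn]"] y by simp
  moreover have "-1 \<le> height (D @ [Dn]) (Suc y)"
    using height_append[of "Suc y" D "[Dn]"] dyck_height_nonneg[OF assms(1), of "Suc y"]
      height_snoc_Dn_end[OF assms(1)] y by (cases "y = length D") auto
  moreover have "nat (int y + 1) = Suc y" by simp
  ultimately show "c \<in> shape (grow_at D p) - shape D"
    unfolding c mem_shape_diff_iff[OF length_grow_at] using y height_grow_at[OF p, of "Suc y"]
      height_append[of "Suc y" D "[Dn]"] by auto
qed

lemma shape_step_grow_at:
  assumes "dyck D" and p: "p \<in> down_steps (D @ [Dn])"
  shows "shape_step D (grow_at D p)"
  using shape_subset_grow_at[OF p] shape_grow_at_diff_subset[OF assms] added_ribbon_subset[OF assms]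
    ribbon_added_ribbon[OF p] by (simp add: shape_step_def subset_antisym)

lemma height_le_if_shape_subset:
  assumes "dyck D" and "dyck E" and "shape D \<subseteq> shape E" and "x \<le> length D"
  shows "height D x \<le> height E x"
proof (rule ccontr)
  assume H: "\<not> height D x \<le> height E x"
  then have "1 \<le> x" by (cases x) auto
  moreover have "x < length D"
    using H assms(1,4) dyck_height_nonneg[OF assms(2), of x] by (cases "x = length D") auto
  ultimately have "(int x - 1, height D x - 1) \<in> shape D"
    using H dyck_height_nonneg[OF assms(2), of x] even_height_plus[of x D] assms(4)
    by (auto simp: shape_def)
  then have "(int x - 1, height D x - 1) \<in> shape E" using assms(3) by blast
  then have "height D x \<le> height E x" by (simp add: shape_def)
  with H show False ..
qed

lemma down_step_if_raised:
  assumes "p < length D" and "height E p = height D p" and "height E (Suc p) = height D (Suc p) + 2"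
  shows "D ! p = Dn"
proof -
  have "stepval (D ! p) + 2 \<le> 1"
    using assms abs_height_Suc_diff[of E p] height_Suc[of p D] by simp
  then show ?thesis by (cases "D ! p") auto
qed

lemma grow_at_eq_if_heights:
  assumes "dyck D" and "dyck E" and lE: "length E = length D + 2" and p: "p \<in> down_steps (D @ [Dn])"
    and hE: "\<And>x. x \<le> length D \<Longrightarrow> height E x = height D x + (if p < x then 2 else 0)"
  shows "E = grow_at D p"
proof (rule heights_eq_imp_eq)
  have "p \<le> length D" using p by (simp add: down_steps_def)
  show "length E = length (grow_at D p)" using lE by simp
  fix x assume "x \<le> length E"
  then have "x \<le> length D + 2" using lE by simp
  then consider "x \<le> length D" | "x = Suc (length D)" | "x = length D + 2" by linarith
  then show "height E x = height (grow_at D p) x"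
  proof cases
    case 1
    then show ?thesis using hE[of x] height_grow_at[OF p, of x] by (simp add: height_append)
  next
    case 2
    then show ?thesis
      using dyck_height_before_end[OF assms(2), of "Suc (length D)"] lE height_grow_at[OF p, of x]
        height_snoc_Dn_end[OF assms(1)] \<open>p \<le> length D\<close> by simp
  next
    case 3
    then show ?thesis using dyck_height_end[OF assms(2)] lE height_grow_at_end[OF assms(1) p] by simp
  qed
qed

context
  fixes D E :: "step list"
  assumes dyck_D: "dyck D" and dyck_E: "dyck E" and step_DE: "shape_step D E"
begin

lemma shape_step_length: "length E = length D + 2"
  using step_DE by (simp add: shape_step_def)

lemma shape_step_height_parity: "x \<le> length D \<Longrightarrow> even (height E x - height D x)"
  using even_height_plus[of x D] even_height_plus[of x E] shape_step_length by presburger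

lemma shape_step_height_le_plus_2:
  assumes x: "x \<le> length D"
  shows "height E x \<le> height D x + 2"
proof (rule ccontr)
  define n where "n = length D"
  define R where "R = shape E - shape D"
  have lE: "length E = length D + 2" by (rule shape_step_length)
  assume "\<not> height E x \<le> height D x + 2"
  then have H4: "height D x + 4 \<le> height E x"
    using shape_step_height_parity[OF x] by presburger
  have "x \<noteq> 0" using H4 by (cases x) auto
  moreover have "x \<noteq> 1"
    using H4 abs_height_Suc_diff[of E 0] dyck_height_nonneg[OF dyck_D, of 1] by auto
  moreover have "x \<noteq> n"
    using H4 abs_height_Suc_diff[of E n] dyck_height_before_end[OF dyck_E, of "Suc n"] lE dyck_D
    by (auto simp: n_def)
  ultimately have x2: "2 \<le> x" "x < n" using x by (auto simp: n_def)
  (* The four cells around (int x - 1, height D x + 2) would form a 2x2 square in the ribbon. *)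
  define a where "a = int x - 2"
  define y where "y = height D x + 2"
  have nats: "nat (a + 1) = x - 1" "nat (a + 1 + 1) = x" "nat (a + 2 + 1) = Suc x"
    using x2 by (simp_all add: a_def)
  have E_nb: "height E x - 1 \<le> height E (x - 1)" "height E x - 1 \<le> height E (Suc x)"
    using abs_height_Suc_diff[of E "x - 1"] abs_height_Suc_diff[of E x] x2 by auto
  have D_nb: "height D (x - 1) \<le> height D x + 1" "height D (Suc x) \<le> height D x + 1"
    using abs_height_Suc_diff[of D "x - 1"] abs_height_Suc_diff[of D x] x2 by auto
  have par: "even (height D x + int x)" using even_height_plus[of x D] x by simp
  have nonneg: "0 \<le> height D x" by (rule dyck_height_nonneg[OF dyck_D])
  have "even (a + y)" "even (a + 1 + (y + 1))" "even (a + 1 + (y - 1))" "even (a + 2 + y)"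
    using par unfolding a_def y_def by presburger+
  then have "(a, y) \<in> R" "(a + 1, y + 1) \<in> R" "(a + 1, y - 1) \<in> R" "(a + 2, y) \<in> R"
    unfolding R_def mem_shape_diff_iff[OF lE] nats
    using x2 H4 E_nb D_nb nonneg by (simp_all add: a_def y_def n_def)
  then show False
    using step_DE unfolding shape_step_def ribbon_def R_def by blast
qed

lemma shape_step_height_cases:
  assumes x: "x \<le> length D"
  shows "height E x = height D x \<or> height E x = height D x + 2"
proof -
  have "height D x \<le> height E x"
    using height_le_if_shape_subset[OF dyck_D dyck_E _ x] step_DE by (simp add: shape_step_def)
  then show ?thesis
    using shape_step_height_parity[OF x] shape_step_height_le_plus_2[OF x] by presburger
qed

lemma shape_step_height_raised_Suc:
  assumes x: "1 \<le> x" "x < length D" and raised: "height E x = height D x + 2"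
  shows "height E (Suc x) = height D (Suc x) + 2"
proof (rule ccontr)
  define n where "n = length D"
  define R where "R = shape E - shape D"
  define Adj where "Adj = {(c, d). c \<in> R \<and> d \<in> R \<and> adjacent c d}"
  have lE: "length E = length D + 2" by (rule shape_step_length)
  assume "height E (Suc x) \<noteq> height D (Suc x) + 2"
  then have flat: "height E (Suc x) = height D (Suc x)"
    using shape_step_height_cases[of "Suc x"] x by auto
  (* Column int x then contains no added cell, so it separates the added cell left of it from
     the added cell (length D, 0). *)
  have no_cell: "(int x, b) \<notin> R" for b
  proof
    assume "(int x, b) \<in> R"
    moreover have "nat (int x + 1) = Suc x" by simp
    ultimately have "0 \<le> b" "b + 1 \<le> height D (Suc x)" "\<not> int x \<le> int n - 2"
      unfolding R_def mem_shape_diff_iff[OF lE] using flat by (auto simp: n_def)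
    moreover have "Suc x = n \<Longrightarrow> height D (Suc x) = 0" using dyck_D by (simp add: n_def)
    ultimately show False using x by (cases "Suc x = n") (auto simp: n_def)
  qed
  have "even (int n)" "nat (int n + 1) = Suc n" using dyck_D by (simp_all add: dyck_def n_def)
  then have end_cell: "(int n, 0) \<in> R"
    unfolding R_def mem_shape_diff_iff[OF lE]
    using dyck_height_before_end[OF dyck_E, of "Suc n"] lE by (simp add: n_def)
  have "even (height D x + int x)" using even_height_plus[of x D] x by simp
  then have "(int x - 1, height D x + 1) \<in> R"
    unfolding R_def mem_shape_diff_iff[OF lE]
    using x raised dyck_height_nonneg[OF dyck_D, of x] by (simp add: n_def)
  moreover have "connected_cells R" using step_DE by (simp add: shape_step_def ribbon_def R_def)
  ultimately have "((int x - 1, height D x + 1), (int n, 0)) \<in> Adj\<^sup>*"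
    using end_cell unfolding connected_cells_def Adj_def by blast
  then have "fst (int n, 0 :: int) < int x"
  proof (induction rule: rtrancl_induct)
    case (step c d)
    then have "fst d \<le> int x" "d \<in> R" by (auto simp: Adj_def adjacent_def)
    moreover have "fst d \<noteq> int x"
      using no_cell[of "snd d"] \<open>d \<in> R\<close> by (metis prod.collapse)
    ultimately show ?case by simp
  qed simp
  then show False using x by (simp add: n_def)
qed

lemma shape_step_heights:
  obtains p where "p \<le> length D"
    and "\<And>x. x \<le> length D \<Longrightarrow> height E x = height D x + (if p < x then 2 else 0)"
proof (cases "\<exists>x \<le> length D. height E x = height D x + 2")
  case False
  then show ?thesis using that[of "length D"] shape_step_height_cases by force
next
  case True
  define q where "q = (LEAST x. x \<le> length D \<and> height E x = height D x + 2)"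
  have q: "q \<le> length D" "height E q = height D q + 2"
    using LeastI_ex[OF True[unfolded Bex_def[symmetric]]] by (simp_all add: q_def)
  then have "q \<noteq> 0" by (cases q) auto
  have below: "height E x = height D x" if "x < q" for x
    using not_less_Least[of x "\<lambda>x. x \<le> length D \<and> height E x = height D x + 2"] that q(1)
      shape_step_height_cases[of x] unfolding q_def[symmetric] by auto
  have above: "height E x = height D x + 2" if "q \<le> x" "x \<le> length D" for x
    using that(1)
  proof (induction x rule: dec_induct)
    case (step k)
    then show ?case using shape_step_height_raised_Suc[of k] \<open>q \<noteq> 0\<close> that(2) by simp
  qed (rule q(2))
  show ?thesis
  proof (rule that[of "q - 1"])
    show "q - 1 \<le> length D" using q(1) by simp
    fix x assume "x \<le> length D"
    then show "height E x = height D x + (if q - 1 < x then 2 else 0)"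
      using below[of x] above[of x] \<open>q \<noteq> 0\<close> by (cases "q \<le> x") auto
  qed
qed

lemma shape_step_eq_grow_at:
  obtains p where "p \<in> down_steps (D @ [Dn])" and "E = grow_at D p"
proof -
  obtain p where "p \<le> length D"
    and hE: "\<And>x. x \<le> length D \<Longrightarrow> height E x = height D x + (if p < x then 2 else 0)"
    using shape_step_heights by blast
  moreover have "D ! p = Dn" if "p < length D"
    using down_step_if_raised[of p D] hE[of p] hE[of "Suc p"] that by simp
  ultimately have "p \<in> down_steps (D @ [Dn])"
    by (cases "p < length D") (auto simp: down_steps_def nth_append)
  moreover have "E = grow_at D p"
    using grow_at_eq_if_heights[OF dyck_D dyck_E shape_step_length \<open>p \<in> _\<close>] hE by blast
  ultimately show ?thesis using that by blast
qed

end

theorem dyck_shape_step_iff: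
  assumes "dyck D"
  shows "dyck E \<and> shape_step D E \<longleftrightarrow> E \<in> grow_at D ` down_steps (D @ [Dn])"
  using assms dyck_grow_at shape_step_grow_at shape_step_eq_grow_at by blast

section \<open>Profiles of permutations\<close>

lemma perms_length: "xs \<in> perms n \<Longrightarrow> length xs = n"
  by (simp add: perms_def)

lemma perms_0: "perms 0 = {[]}"
  by (auto simp: perms_def)

lemma sig_0 [simp]: "sig xs 0 = 0"
  by (simp add: sig_def)

lemma sig_Suc_length [simp]: "sig xs (Suc (length xs)) = Suc (length xs)"
  by (simp add: sig_def)

lemma sig_perm_range:
  assumes "xs \<in> perms n" and "i \<in> {1..n}"
  shows "sig xs i \<in> {1..n}"
proof -
  have "xs ! (i - 1) \<in> set xs" by (rule nth_mem) (use assms in \<open>auto simp: perms_def\<close>)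
  then have "xs ! (i - 1) \<in> {1..n}" using assms(1) by (simp add: perms_def)
  then show ?thesis using assms by (simp add: perms_def sig_def)
qed

lemma sig_perm_le: "xs \<in> perms n \<Longrightarrow> t \<le> n \<Longrightarrow> sig xs t \<le> n"
  using sig_perm_range[of xs n t] by (cases "t = 0") auto

lemma sig_perm_image:
  assumes "xs \<in> perms n"
  shows "sig xs ` {1..n} = {1..n}"
proof
  show "sig xs ` {1..n} \<subseteq> {1..n}" using sig_perm_range[OF assms] by blast
next
  show "{1..n} \<subseteq> sig xs ` {1..n}"
  proof
    fix j assume "j \<in> {1..n}"
    then have "j \<in> set xs" using assms by (simp add: perms_def)
    then obtain q where "q < n" "xs ! q = j"
      using assms by (auto simp: perms_def in_set_conv_nth)
    then have "sig xs (Suc q) = j" using assms by (simp add: perms_def sig_def)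
    then show "j \<in> sig xs ` {1..n}" using \<open>q < n\<close> by force
  qed
qed

lemma inj_on_sig:
  assumes "xs \<in> perms n"
  shows "inj_on (sig xs) {0..Suc n}"
proof (rule inj_onI)
  fix i i' assume i: "i \<in> {0..Suc n}" and i': "i' \<in> {0..Suc n}" and eq: "sig xs i = sig xs i'"
  have range: "sig xs i \<in> {1..n} \<longleftrightarrow> i \<in> {1..n}" if "i \<in> {0..Suc n}" for i
    using that sig_perm_range[OF assms, of i] assms by (auto simp: perms_def sig_def)
  show "i = i'"
  proof (cases "i \<in> {1..n}")
    case True
    then have "i' \<in> {1..n}" using range[OF i] range[OF i'] eq by metis
    then have "xs ! (i - 1) = xs ! (i' - 1)" using True eq assms by (simp add: perms_def sig_def)
    moreover have "i - 1 < length xs" "i' - 1 < length xs" "distinct xs"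
      using True \<open>i' \<in> {1..n}\<close> assms by (auto simp: perms_def)
    ultimately have "i - 1 = i' - 1" using nth_eq_iff_index_eq by blast
    then show ?thesis using True \<open>i' \<in> {1..n}\<close> by auto
  next
    case False
    then have "i' \<notin> {1..n}" using range[OF i] range[OF i'] eq by metis
    then have "i \<in> {0, Suc n}" "i' \<in> {0, Suc n}" using False i i' by auto
    then show ?thesis using eq assms by (auto simp: perms_def)
  qed
qed

lemma sig_perm_eq_iff:
  "xs \<in> perms n \<Longrightarrow> i \<le> Suc n \<Longrightarrow> i' \<le> Suc n \<Longrightarrow> sig xs i = sig xs i' \<longleftrightarrow> i = i'"
  using inj_on_sig[of xs n] by (auto dest: inj_onD)

lemma pos_sig:
  assumes "xs \<in> perms n" and i: "i \<in> {1..n}"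
  shows "pos xs (sig xs i) = i"
  unfolding pos_def
proof (rule the_equality)
  show "1 \<le> i \<and> i \<le> length xs \<and> xs ! (i - 1) = sig xs i"
    using assms by (simp add: perms_def sig_def)
next
  fix i' assume "1 \<le> i' \<and> i' \<le> length xs \<and> xs ! (i' - 1) = sig xs i"
  then have "sig xs i' = sig xs i" "i' \<in> {0..Suc n}" using assms by (auto simp: perms_def sig_def)
  then show "i' = i" using inj_on_sig[OF assms(1)] i by (auto dest: inj_onD)
qed

lemma letters_sig:
  assumes "xs \<in> perms n" and i: "i \<in> {1..n}"
  shows "letters xs (sig xs i) =
    [if sig xs i < sig xs (Suc i) then Up else Dn, if sig xs i < sig xs (i - 1) then Up else Dn]"
proof -
  have "sig xs (i - 1) \<noteq> sig xs i" "sig xs (Suc i) \<noteq> sig xs i"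
    using inj_on_sig[OF assms(1)] i by (auto dest: inj_onD)
  then show ?thesis
    unfolding letters_def is_valley_def is_peak_def is_dasc_def is_ddes_def Let_def pos_sig[OF assms]
    by auto
qed

lemma profile_Nil [simp]: "profile [] = []"
  by (simp add: profile_def)

lemma concat_map_pairs:
  assumes "\<And>j. length (f j) = 2"
  shows "concat (map f [Suc 0..<Suc n]) = map (\<lambda>t. f (t div 2 + 1) ! (t mod 2)) [0..<2 * n]"
proof (induction n)
  case (Suc n)
  have "f (Suc n) = [f (Suc n) ! 0, f (Suc n) ! 1]"
    using assms[of "Suc n"] by (cases "f (Suc n)") (auto simp: length_Suc_conv)
  moreover have "[0..<2 * Suc n] = [0..<2 * n] @ [2 * n, Suc (2 * n)]" by simp
  ultimately show ?case using Suc.IH by simp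
qed simp

lemma profile_eq_map: "profile xs = map (\<lambda>t. letters xs (t div 2 + 1) ! (t mod 2)) [0..<2 * length xs]"
  unfolding profile_def using concat_map_pairs[of "letters xs" "length xs"]
  by (simp add: letters_def)

lemma length_profile [simp]: "length (profile xs) = 2 * length xs"
  by (simp add: profile_eq_map)

lemma profile_nth:
  "t < 2 * length xs \<Longrightarrow> profile xs ! t = letters xs (t div 2 + 1) ! (t mod 2)"
  by (simp add: profile_eq_map)

definition letter_pos :: "nat \<Rightarrow> nat \<Rightarrow> nat" where
  "letter_pos j e = 2 * j - 2 + e"

lemma letter_pos_inject:
  assumes "1 \<le> j" and "1 \<le> j'" and "e < 2" and "e' < 2"
  shows "letter_pos j e = letter_pos j' e' \<longleftrightarrow> j = j' \<and> e = e'"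
proof -
  obtain a a' where "j = Suc a" "j' = Suc a'" using assms(1,2) by (cases j; cases j') auto
  then show ?thesis
    using less_2_cases[OF assms(3)] less_2_cases[OF assms(4)] by (auto simp: letter_pos_def) presburger+
qed

lemma letter_pos_less: "1 \<le> j \<Longrightarrow> j \<le> n \<Longrightarrow> e < 2 \<Longrightarrow> letter_pos j e < 2 * n"
  unfolding letter_pos_def by linarith

lemma profile_nth_letter_pos:
  assumes "1 \<le> j" and "j \<le> length xs" and "e < 2"
  shows "profile xs ! letter_pos j e = letters xs j ! e"
proof -
  obtain a where "j = Suc a" using assms(1) by (cases j) auto
  then have "letter_pos j e div 2 + 1 = j" "letter_pos j e mod 2 = e"
    using less_2_cases[OF assms(3)] by (auto simp: letter_pos_def)
  then show ?thesis using profile_nth[of "letter_pos j e" xs] letter_pos_less assms by simp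
qed

lemma profile_position:
  assumes "xs \<in> perms n" and "t < 2 * n"
  obtains i e where "i \<in> {1..n}" and "e < 2" and "t = letter_pos (sig xs i) e"
proof -
  have "t div 2 + 1 \<in> {1..n}" using assms(2) by auto
  then obtain i where "i \<in> {1..n}" "sig xs i = t div 2 + 1"
    using sig_perm_image[OF assms(1)] by (metis imageE)
  moreover have "t = letter_pos (t div 2 + 1) (t mod 2)" by (simp add: letter_pos_def)
  ultimately show ?thesis using that[of i "t mod 2"] by simp
qed

lemma letter_pos_sig_inject:
  assumes "xs \<in> perms n" and "i \<in> {1..n}" and "i' \<in> {1..n}" and "e < 2" and "e' < 2"
  shows "letter_pos (sig xs i) e = letter_pos (sig xs i') e' \<longleftrightarrow> i = i' \<and> e = e'"
proof -
  have "1 \<le> sig xs i" "1 \<le> sig xs i'" using sig_perm_range[OF assms(1)] assms(2,3) by auto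
  then show ?thesis
    using letter_pos_inject[of "sig xs i" "sig xs i'" e e'] sig_perm_eq_iff[OF assms(1), of i i'] assms
    by auto
qed

section \<open>Inserting the maximum\<close>

definition insert_at :: "nat \<Rightarrow> 'a \<Rightarrow> 'a list \<Rightarrow> 'a list" where
  "insert_at k x xs = take k xs @ x # drop k xs"

lemma length_insert_at [simp]: "k \<le> length xs \<Longrightarrow> length (insert_at k x xs) = Suc (length xs)"
  by (simp add: insert_at_def)

lemma set_insert_at [simp]: "set (insert_at k x xs) = insert x (set xs)"
  using set_append[of "take k xs" "drop k xs"] by (simp add: insert_at_def)

lemma distinct_insert_at [simp]: "distinct (insert_at k x xs) \<longleftrightarrow> x \<notin> set xs \<and> distinct xs"
proof -
  have "distinct (insert_at k x xs) \<longleftrightarrow> distinct (x # take k xs @ drop k xs)"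
    unfolding insert_at_def distinct_append distinct.simps set_append list.set by blast
  then show ?thesis by simp
qed

lemma nth_insert_at:
  assumes "k \<le> length xs" and "i \<le> length xs"
  shows "insert_at k x xs ! i = (if i < k then xs ! i else if i = k then x else xs ! (i - 1))"
proof (cases "i < k")
  case True
  then show ?thesis using assms by (simp add: insert_at_def nth_append)
next
  case False
  then have "insert_at k x xs ! i = (x # drop k xs) ! (i - k)"
    using assms by (simp add: insert_at_def nth_append)
  also have "\<dots> = (if i = k then x else xs ! (i - 1))"
    using False assms by (cases "i - k") (auto simp: nat_diff_split_asm intro!: arg_cong[where f = "(!) xs"])
  finally show ?thesis using False by simp
qed

lemma sig_insert_at:
  assumes k: "k \<le> length xs"
  shows "sig (insert_at k v xs) t =
    (if t \<le> k then sig xs t else if t = Suc k then v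
     else if t \<le> Suc (length xs) then sig xs (t - 1) else length xs + 2)"
proof -
  consider "t = 0" | "1 \<le> t" "t \<le> k" | "t = Suc k" | "Suc k < t" "t \<le> Suc (length xs)"
    | "Suc (length xs) < t" by linarith
  then show ?thesis
  proof cases
    case 2
    then show ?thesis using k nth_insert_at[OF k, of "t - 1" v] by (simp add: sig_def)
  next
    case 3
    then show ?thesis using k nth_insert_at[OF k, of k v] by (simp add: sig_def)
  next
    case 4
    then have "t - 1 \<noteq> 0" "t - 1 \<le> length xs" "\<not> t - 1 < k" "t - 1 \<noteq> k" "t \<noteq> 0" by auto
    then show ?thesis using 4 k nth_insert_at[OF k, of "t - 1" v] by (simp add: sig_def)
  qed (use k in \<open>simp_all add: sig_def\<close>)
qed

lemma insert_at_perms: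
  "xs \<in> perms n \<Longrightarrow> k \<le> n \<Longrightarrow> insert_at k (Suc n) xs \<in> perms (Suc n)"
  by (auto simp: perms_def)

lemma del_max_insert_at:
  assumes "xs \<in> perms n" and "k \<le> n"
  shows "del_max (insert_at k (Suc n) xs) = xs"
proof -
  have "Suc n \<notin> set xs" using assms(1) by (simp add: perms_def)
  then have "\<forall>x \<in> set (take k xs). x \<noteq> Suc n" "\<forall>x \<in> set (drop k xs). x \<noteq> Suc n"
    by (auto dest: in_set_takeD in_set_dropD)
  then have "filter (\<lambda>x. x \<noteq> Suc n) (take k xs) = take k xs"
    "filter (\<lambda>x. x \<noteq> Suc n) (drop k xs) = drop k xs"
    by (simp_all add: filter_id_conv)
  then show ?thesis using assms by (simp add: del_max_def perms_def insert_at_def)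
qed

lemma inj_on_insert_at: "inj_on (\<lambda>(xs, k). insert_at k (Suc n) xs) (perms n \<times> {..n})"
proof (rule inj_onI)
  fix a b assume "a \<in> perms n \<times> {..n}" "b \<in> perms n \<times> {..n}"
  then obtain xs k ys l where ab: "a = (xs, k)" "b = (ys, l)"
    and xs: "xs \<in> perms n" "k \<le> n" and ys: "ys \<in> perms n" "l \<le> n" by auto
  assume "(\<lambda>(xs, k). insert_at k (Suc n) xs) a = (\<lambda>(xs, k). insert_at k (Suc n) xs) b"
  then have eq: "insert_at k (Suc n) xs = insert_at l (Suc n) ys" by (simp add: ab)
  then have "xs = ys" using del_max_insert_at[OF xs] del_max_insert_at[OF ys] by simp
  define zs where "zs = insert_at k (Suc n) xs"
  have "distinct zs" "length zs = Suc n"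
    using insert_at_perms[OF xs] by (simp_all add: perms_def zs_def)
  moreover have "zs ! k = Suc n"
    using nth_insert_at[of k xs k] xs by (simp add: zs_def perms_length)
  moreover have "zs ! l = Suc n"
    using nth_insert_at[of l ys l] ys eq by (simp add: zs_def perms_length)
  moreover have "k < length zs" "l < length zs" using xs ys \<open>length zs = Suc n\<close> by simp_all
  ultimately have "k = l" using nth_eq_iff_index_eq by metis
  then show "a = b" using ab \<open>xs = ys\<close> by simp
qed

lemma perms_Suc_subset_insert_at_image:
  "perms (Suc n) \<subseteq> (\<lambda>(xs, k). insert_at k (Suc n) xs) ` (perms n \<times> {..n})"
proof
  fix ys assume ys: "ys \<in> perms (Suc n)"
  then have "Suc n \<in> set ys" by (simp add: perms_def)
  then obtain A B where AB: "ys = A @ Suc n # B" by (meson split_list)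
  have "insert (Suc n) (set (A @ B)) = {1..Suc n}" "Suc n \<notin> set (A @ B)"
    using ys unfolding AB perms_def by auto
  then have "set (A @ B) = {1..Suc n} - {Suc n}" by blast
  also have "\<dots> = {1..n}" by auto
  finally have "A @ B \<in> perms n" "length A \<le> n"
    using ys unfolding AB perms_def by auto
  moreover have "ys = insert_at (length A) (Suc n) (A @ B)"
    by (simp add: AB insert_at_def)
  ultimately show "ys \<in> (\<lambda>(xs, k). insert_at k (Suc n) xs) ` (perms n \<times> {..n})"
    by (intro image_eqI[where x = "(A @ B, length A)"]) auto
qed

lemma bij_betw_insert_at:
  "bij_betw (\<lambda>(xs, k). insert_at k (Suc n) xs) (perms n \<times> {..n}) (perms (Suc n))"
  unfolding bij_betw_def
  using inj_on_insert_at perms_Suc_subset_insert_at_image insert_at_perms by fastforce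

lemma letters_insert_at:
  assumes tau: "\<tau> \<in> perms m" and k: "k \<le> m" and i: "i \<in> {1..m}"
  shows "letters (insert_at k (Suc m) \<tau>) (sig \<tau> i) =
    [if i = k then Up else letters \<tau> (sig \<tau> i) ! 0, if i = Suc k then Up else letters \<tau> (sig \<tau> i) ! 1]"
proof -
  define \<sigma> where "\<sigma> = insert_at k (Suc m) \<tau>"
  define i' where "i' = (if i \<le> k then i else Suc i)"
  have sig_\<sigma>: "sig \<sigma> t = (if t \<le> k then sig \<tau> t else if t = Suc k then Suc m
      else if t \<le> Suc m then sig \<tau> (t - 1) else m + 2)" for t
    using sig_insert_at[of k \<tau> "Suc m" t] k perms_length[OF tau] by (simp add: \<sigma>_def)
  have \<sigma>: "\<sigma> \<in> perms (Suc m)" using insert_at_perms[OF tau k] by (simp add: \<sigma>_def)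
  have i': "i' \<in> {1..Suc m}" using i by (auto simp: i'_def)
  have im: "1 \<le> i" "i \<le> m" using i by auto
  have j: "sig \<tau> i \<le> m" "sig \<tau> (Suc m) = Suc m"
    using sig_perm_le[OF tau, of i] i perms_length[OF tau] by auto
  have "sig \<sigma> i' = sig \<tau> i" using i by (auto simp: sig_\<sigma> i'_def)
  then have "letters \<sigma> (sig \<tau> i) = [if sig \<tau> i < sig \<sigma> (Suc i') then Up else Dn,
      if sig \<tau> i < sig \<sigma> (i' - 1) then Up else Dn]"
    using letters_sig[OF \<sigma> i'] by simp
  moreover have "sig \<tau> i < sig \<sigma> (Suc i') \<longleftrightarrow> i = k \<or> sig \<tau> i < sig \<tau> (Suc i)"
  proof -
    consider "Suc i \<le> k" | "i = k" | "k < i" "i < m" | "k < i" "i = m" using im by linarith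
    then show ?thesis by cases (use j in \<open>simp_all add: sig_\<sigma> i'_def\<close>)
  qed
  moreover have "sig \<tau> i < sig \<sigma> (i' - 1) \<longleftrightarrow> i = Suc k \<or> sig \<tau> i < sig \<tau> (i - 1)"
  proof -
    consider "i \<le> k" | "i = Suc k" | "Suc k < i" by linarith
    then show ?thesis by cases (use j i in \<open>simp_all add: sig_\<sigma> i'_def\<close>)
  qed
  ultimately show ?thesis unfolding letters_sig[OF tau i] by (simp add: \<sigma>_def)
qed

lemma letters_insert_at_max:
  assumes tau: "\<tau> \<in> perms m" and k: "k \<le> m"
  shows "letters (insert_at k (Suc m) \<tau>) (Suc m) = [if k = m then Up else Dn, Dn]"
proof -
  define \<sigma> where "\<sigma> = insert_at k (Suc m) \<tau>"
  have sig_\<sigma>: "sig \<sigma> t = (if t \<le> k then sig \<tau> t else if t = Suc k then Suc m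
      else if t \<le> Suc m then sig \<tau> (t - 1) else m + 2)" for t
    using sig_insert_at[of k \<tau> "Suc m" t] k perms_length[OF tau] by (simp add: \<sigma>_def)
  have \<sigma>: "\<sigma> \<in> perms (Suc m)" using insert_at_perms[OF tau k] by (simp add: \<sigma>_def)
  have "Suc k \<in> {1..Suc m}" using k by simp
  from letters_sig[OF \<sigma> this] have "letters \<sigma> (Suc m) =
      [if Suc m < sig \<sigma> (Suc (Suc k)) then Up else Dn, if Suc m < sig \<sigma> k then Up else Dn]"
    by (simp add: sig_\<sigma>)
  moreover have "Suc m < sig \<sigma> (Suc (Suc k)) \<longleftrightarrow> k = m"
    using sig_perm_le[OF tau, of "Suc k"] k by (cases "k = m") (simp_all add: sig_\<sigma>)
  moreover have "\<not> Suc m < sig \<sigma> k"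
    using sig_perm_le[OF tau, of k] k by (simp add: sig_\<sigma>)
  ultimately show ?thesis by (simp add: \<sigma>_def)
qed

(* Inserting the maximum between the values sig xs k and sig xs (k + 1) turns the second letter
   of the right neighbour into Up if it is the larger one, and the first letter of the left
   neighbour otherwise; inserting at the end turns the first new letter into Up. *)
definition raised_step :: "nat list \<Rightarrow> nat \<Rightarrow> nat" where
  "raised_step xs k =
    (if k = length xs then 2 * length xs
     else if sig xs k < sig xs (Suc k) then letter_pos (sig xs (Suc k)) 1
     else letter_pos (sig xs k) 0)"

lemma raised_step_length: "raised_step xs (length xs) = 2 * length xs"
  by (simp add: raised_step_def)

lemma raised_step_cases:
  assumes tau: "\<tau> \<in> perms m" and k: "k < m"
  obtains (right) "sig \<tau> k < sig \<tau> (Suc k)" and "raised_step \<tau> k = letter_pos (sig \<tau> (Suc k)) 1"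
    | (left) "sig \<tau> (Suc k) < sig \<tau> k" and "k \<in> {1..m}" and "raised_step \<tau> k = letter_pos (sig \<tau> k) 0"
proof -
  have "k \<noteq> length \<tau>" using k perms_length[OF tau] by simp
  show ?thesis
  proof (cases "sig \<tau> k < sig \<tau> (Suc k)")
    case True
    then show ?thesis using right \<open>k \<noteq> length \<tau>\<close> by (simp add: raised_step_def)
  next
    case False
    moreover have "sig \<tau> k \<noteq> sig \<tau> (Suc k)" using sig_perm_eq_iff[OF tau, of k "Suc k"] k by simp
    ultimately have "sig \<tau> (Suc k) < sig \<tau> k" by simp
    moreover have "k \<noteq> 0" using calculation by (cases k) auto
    ultimately show ?thesis
      using left k \<open>k \<noteq> length \<tau>\<close> False by (simp add: raised_step_def)
  qed
qed

lemma raised_step_down: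
  assumes tau: "\<tau> \<in> perms m" and k: "k < m"
  shows "raised_step \<tau> k < 2 * m" and "profile \<tau> ! raised_step \<tau> k = Dn"
proof -
  have range: "sig \<tau> t \<in> {1..m}" if "t \<in> {1..m}" for t by (rule sig_perm_range[OF tau that])
  have len: "length \<tau> = m" by (rule perms_length[OF tau])
  from tau k have "raised_step \<tau> k < 2 * m \<and> profile \<tau> ! raised_step \<tau> k = Dn"
  proof (cases rule: raised_step_cases)
    case right
    have "Suc k \<in> {1..m}" using k by simp
    then show ?thesis
      using right range[of "Suc k"] letter_pos_less profile_nth_letter_pos letters_sig[OF tau] len
      by auto
  next
    case left
    then show ?thesis
      using range[of k] letter_pos_less profile_nth_letter_pos letters_sig[OF tau] len
      by auto
  qed
  then show "raised_step \<tau> k < 2 * m" and "profile \<tau> ! raised_step \<tau> k = Dn" by simp_all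
qed

lemma inj_on_raised_step:
  assumes tau: "\<tau> \<in> perms m"
  shows "inj_on (raised_step \<tau>) {..m}"
proof (rule inj_onI)
  have len: "length \<tau> = m" by (rule perms_length[OF tau])
  fix k l assume k: "k \<in> {..m}" and l: "l \<in> {..m}" and eq: "raised_step \<tau> k = raised_step \<tau> l"
  show "k = l"
  proof (cases "k = m \<or> l = m")
    case True
    have at_m: "raised_step \<tau> j = 2 * m \<longleftrightarrow> j = m" if "j \<le> m" for j
      using raised_step_down(1)[OF tau, of j] raised_step_length[of \<tau>] len that
      by (cases "j = m") auto
    have "k \<le> m" "l \<le> m" using k l by simp_all
    then have "k = m \<longleftrightarrow> l = m" using at_m[of k] at_m[of l] eq by simp
    with True show ?thesis by blast
  next
    case False
    with k l have "k < m" "l < m" by auto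
    have key: "\<exists>i\<in>{1..m}. \<exists>e<2. raised_step \<tau> j = letter_pos (sig \<tau> i) e \<and> j = i - e"
      if "j < m" for j
      using tau that
    proof (cases rule: raised_step_cases)
      case right
      then show ?thesis using \<open>j < m\<close> by (intro bexI[of _ "Suc j"] exI[of _ 1]) auto
    next
      case left
      then show ?thesis by (intro bexI[of _ j] exI[of _ 0]) auto
    qed
    obtain i e where i: "i \<in> {1..m}" "e < 2" "raised_step \<tau> k = letter_pos (sig \<tau> i) e" "k = i - e"
      using key[OF \<open>k < m\<close>] by blast
    obtain i' e' where i': "i' \<in> {1..m}" "e' < 2" "raised_step \<tau> l = letter_pos (sig \<tau> i') e'" "l = i' - e'"
      using key[OF \<open>l < m\<close>] by blast
    have "letter_pos (sig \<tau> i) e = letter_pos (sig \<tau> i') e'" using i(3) i'(3) eq by metis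
    then have "i = i' \<and> e = e'" using letter_pos_sig_inject[OF tau i(1) i'(1) i(2) i'(2)] by blast
    then show ?thesis using i(4) i'(4) by simp
  qed
qed

lemma raised_step_eq_letter_pos_iff:
  assumes tau: "\<tau> \<in> perms m" and k: "k < m" and i: "i \<in> {1..m}" and e: "e < 2"
  shows "raised_step \<tau> k = letter_pos (sig \<tau> i) e \<longleftrightarrow>
    i = k \<and> e = 0 \<and> sig \<tau> (Suc k) < sig \<tau> k \<or> i = Suc k \<and> e = 1 \<and> sig \<tau> k < sig \<tau> (Suc k)"
  using tau k
proof (cases rule: raised_step_cases)
  case right
  have "Suc k \<in> {1..m}" using k by simp
  then show ?thesis using right letter_pos_sig_inject[OF tau _ i, of "Suc k" 1 e] e by auto
next
  case left
  then show ?thesis using letter_pos_sig_inject[OF tau _ i, of k 0 e] e by auto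
qed

lemma down_step_eq_raised_step:
  assumes tau: "\<tau> \<in> perms m" and i: "i \<in> {1..m}" and e: "e < 2"
    and down: "letters \<tau> (sig \<tau> i) ! e = Dn"
  shows "\<exists>k<m. raised_step \<tau> k = letter_pos (sig \<tau> i) e"
proof (cases "e = 0")
  case True
  then have "\<not> sig \<tau> i < sig \<tau> (Suc i)" using down letters_sig[OF tau i] by auto
  moreover have "sig \<tau> i \<le> m" "sig \<tau> (Suc m) = Suc m"
    using sig_perm_le[OF tau, of i] i sig_Suc_length[of \<tau>] perms_length[OF tau] by auto
  moreover have "sig \<tau> (Suc i) \<noteq> sig \<tau> i" using sig_perm_eq_iff[OF tau, of "Suc i" i] i by simp
  ultimately have "i < m" "sig \<tau> (Suc i) < sig \<tau> i" using i by (cases "i = m"; auto)+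
  then show ?thesis using raised_step_eq_letter_pos_iff[OF tau \<open>i < m\<close> i e] True by auto
next
  case False
  then have "e = 1" using e by simp
  have idx: "i - 1 < m" "Suc (i - 1) = i" "i - 1 \<le> Suc m" "i \<le> Suc m" "i - 1 \<noteq> i" using i by auto
  have "\<not> sig \<tau> i < sig \<tau> (i - 1)" using down letters_sig[OF tau i] \<open>e = 1\<close> by auto
  moreover have "sig \<tau> (i - 1) \<noteq> sig \<tau> i" using idx by (simp add: sig_perm_eq_iff[OF tau])
  ultimately show ?thesis
    using raised_step_eq_letter_pos_iff[OF tau idx(1) i e] \<open>e = 1\<close> idx(1,2) by auto
qed

lemma raised_step_image:
  assumes tau: "\<tau> \<in> perms m"
  shows "raised_step \<tau> ` {..m} = down_steps (profile \<tau> @ [Dn])"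
proof (intro equalityI subsetI)
  have len: "length \<tau> = m" by (rule perms_length[OF tau])
  fix t assume "t \<in> raised_step \<tau> ` {..m}"
  then obtain k where k: "k \<le> m" "t = raised_step \<tau> k" by auto
  then show "t \<in> down_steps (profile \<tau> @ [Dn])"
    using raised_step_down[OF tau, of k] raised_step_length[of \<tau>] len
    by (cases "k = m") (auto simp: down_steps_def nth_append)
next
  have len: "length \<tau> = m" by (rule perms_length[OF tau])
  fix t assume "t \<in> down_steps (profile \<tau> @ [Dn])"
  then have t: "t \<le> 2 * m" "t < 2 * m \<Longrightarrow> profile \<tau> ! t = Dn"
    using len by (auto simp: down_steps_def nth_append split: if_splits)
  show "t \<in> raised_step \<tau> ` {..m}"
  proof (cases "t = 2 * m")
    case True
    then show ?thesis using raised_step_length[of \<tau>] len by force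
  next
    case False
    then have "t < 2 * m" using t(1) by simp
    then obtain i e where i: "i \<in> {1..m}" and e: "e < 2" and te: "t = letter_pos (sig \<tau> i) e"
      using profile_position[OF tau] by blast
    moreover have "sig \<tau> i \<in> {1..m}" by (rule sig_perm_range[OF tau i])
    ultimately have "letters \<tau> (sig \<tau> i) ! e = Dn"
      using t(2) \<open>t < 2 * m\<close> profile_nth_letter_pos[of "sig \<tau> i" \<tau> e] len by simp
    then obtain k where "k < m" "t = raised_step \<tau> k"
      using down_step_eq_raised_step[OF tau i e] te by metis
    then show ?thesis by (intro image_eqI[where x = k]) auto
  qed
qed

lemma profile_insert_at_letter_pos:
  assumes tau: "\<tau> \<in> perms m" and k: "k \<le> m" and i: "i \<in> {1..m}" and e: "e < 2"
  shows "profile (insert_at k (Suc m) \<tau>) ! letter_pos (sig \<tau> i) e =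
    grow_at (profile \<tau>) (raised_step \<tau> k) ! letter_pos (sig \<tau> i) e"
proof -
  define t where "t = letter_pos (sig \<tau> i) e"
  define p where "p = raised_step \<tau> k"
  have len: "length \<tau> = m" by (rule perms_length[OF tau])
  have j: "1 \<le> sig \<tau> i" "sig \<tau> i \<le> m" using sig_perm_range[OF tau i] by auto
  have "t < 2 * m" using letter_pos_less[OF j e] by (simp add: t_def)
  have lhs: "profile (insert_at k (Suc m) \<tau>) ! t =
      [if i = k then Up else letters \<tau> (sig \<tau> i) ! 0,
       if i = Suc k then Up else letters \<tau> (sig \<tau> i) ! 1] ! e"
    using profile_nth_letter_pos[of "sig \<tau> i" "insert_at k (Suc m) \<tau>" e] j e k len
      letters_insert_at[OF tau k i] by (simp add: t_def)
  have rhs: "grow_at (profile \<tau>) p ! t = (if t = p then Up else letters \<tau> (sig \<tau> i) ! e)"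
    using nth_grow_at[of t "profile \<tau>" p] \<open>t < 2 * m\<close> len profile_nth_letter_pos[of _ \<tau> e] j e
    by (simp add: t_def)
  note L = letters_sig[OF tau i]
  have "[if i = k then Up else letters \<tau> (sig \<tau> i) ! 0,
       if i = Suc k then Up else letters \<tau> (sig \<tau> i) ! 1] ! e =
      (if t = p then Up else letters \<tau> (sig \<tau> i) ! e)"
  proof (cases "k = m")
    case True
    then have "t \<noteq> p" using \<open>t < 2 * m\<close> raised_step_length[of \<tau>] len by (simp add: p_def)
    moreover have "sig \<tau> (Suc m) = Suc m" using sig_Suc_length[of \<tau>] len by simp
    ultimately show ?thesis using True L less_2_cases[OF e] i j by auto
  next
    case False
    then have "k < m" using k by simp
    then have "sig \<tau> k \<noteq> sig \<tau> (Suc k)" using sig_perm_eq_iff[OF tau, of k "Suc k"] by simp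
    moreover have "t = p \<longleftrightarrow>
        i = k \<and> e = 0 \<and> sig \<tau> (Suc k) < sig \<tau> k \<or> i = Suc k \<and> e = 1 \<and> sig \<tau> k < sig \<tau> (Suc k)"
      using raised_step_eq_letter_pos_iff[OF tau \<open>k < m\<close> i e] by (auto simp: t_def p_def)
    ultimately show ?thesis using L less_2_cases[OF e] by auto
  qed
  then show ?thesis using lhs rhs by (simp add: t_def p_def)
qed

lemma profile_insert_at:
  assumes tau: "\<tau> \<in> perms m" and k: "k \<le> m"
  shows "profile (insert_at k (Suc m) \<tau>) = grow_at (profile \<tau>) (raised_step \<tau> k)"
proof (rule nth_equalityI)
  have len: "length \<tau> = m" by (rule perms_length[OF tau])
  then show "length (profile (insert_at k (Suc m) \<tau>)) = length (grow_at (profile \<tau>) (raised_step \<tau> k))"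
    using k by simp
  have p: "raised_step \<tau> k = 2 * m \<longleftrightarrow> k = m" "raised_step \<tau> k \<le> 2 * m"
    using raised_step_down(1)[OF tau, of k] raised_step_length[of \<tau>] len k
    by (cases "k = m"; simp)+
  have last: "profile (insert_at k (Suc m) \<tau>) ! letter_pos (Suc m) e =
      grow_at (profile \<tau>) (raised_step \<tau> k) ! letter_pos (Suc m) e" if e: "e < 2" for e
  proof -
    have "profile (insert_at k (Suc m) \<tau>) ! letter_pos (Suc m) e = [if k = m then Up else Dn, Dn] ! e"
      using profile_nth_letter_pos[of "Suc m" "insert_at k (Suc m) \<tau>" e] letters_insert_at_max[OF tau k]
        k len e by simp
    moreover have "letter_pos (Suc m) e = 2 * m + e" by (simp add: letter_pos_def)
    ultimately show ?thesis
      using p len less_2_cases[OF e] by (auto simp: grow_at_def nth_append nth_list_update)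
  qed
  fix t assume "t < length (profile (insert_at k (Suc m) \<tau>))"
  then have "t < 2 * m \<or> t = 2 * m \<or> t = 2 * m + 1" using k len by (simp add: less_Suc_eq)
  then consider "t < 2 * m" | "t = letter_pos (Suc m) 0" | "t = letter_pos (Suc m) 1"
    by (auto simp: letter_pos_def)
  then show "profile (insert_at k (Suc m) \<tau>) ! t = grow_at (profile \<tau>) (raised_step \<tau> k) ! t"
  proof cases
    case 1
    then obtain i e where "i \<in> {1..m}" "e < 2" "t = letter_pos (sig \<tau> i) e"
      using profile_position[OF tau] by blast
    then show ?thesis using profile_insert_at_letter_pos[OF tau k] by simp
  qed (use last in simp_all)
qed

section \<open>Chains of Dyck shapes\<close>

lemma profile_chain_eq_Nil_iff [simp]: "profile_chain xs = [] \<longleftrightarrow> xs = []"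
  by (simp add: profile_chain_def)

lemma last_profile_chain: "xs \<noteq> [] \<Longrightarrow> last (profile_chain xs) = profile xs"
  by (simp add: profile_chain_def last_map)

lemma profile_chain_insert_at:
  assumes tau: "\<tau> \<in> perms m" and k: "k \<le> m"
  shows "profile_chain (insert_at k (Suc m) \<tau>) = profile_chain \<tau> @ [profile (insert_at k (Suc m) \<tau>)]"
proof -
  define \<sigma> where "\<sigma> = insert_at k (Suc m) \<tau>"
  have len: "length \<tau> = m" "length \<sigma> = Suc m"
    using perms_length[OF tau] k by (simp_all add: \<sigma>_def)
  have "(del_max ^^ (m - i)) \<sigma> = (del_max ^^ (m - 1 - i)) \<tau>" if "i < m" for i
  proof -
    have "m - i = Suc (m - 1 - i)" using that by simp
    then show ?thesis
      using del_max_insert_at[OF tau k] by (simp only: funpow_Suc_right o_apply \<sigma>_def)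
  qed
  then have "profile_chain \<sigma> = map (\<lambda>i. profile ((del_max ^^ (m - 1 - i)) \<tau>)) [0..<m] @ [profile \<sigma>]"
    by (simp add: profile_chain_def len)
  then show ?thesis by (simp add: profile_chain_def len \<sigma>_def)
qed

lemma chains_0: "chains 0 = {[]}"
  by (auto simp: chains_def)

lemma snoc_in_chains_iff:
  "c @ [E] \<in> chains (Suc m) \<longleftrightarrow>
    c \<in> chains m \<and> dyck E \<and> length E = 2 * Suc m \<and> (c \<noteq> [] \<longrightarrow> shape_step (last c) E)"
proof (cases "length c = m")
  case True
  have nth: "(c @ [E]) ! i = (if i < m then c ! i else E)" if "i \<le> m" for i
    using True that by (simp add: nth_append)
  have shapes: "(\<forall>i < Suc m. dyck ((c @ [E]) ! i) \<and> length ((c @ [E]) ! i) = 2 * (i + 1)) \<longleftrightarrow>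
      (\<forall>i < m. dyck (c ! i) \<and> length (c ! i) = 2 * (i + 1)) \<and> dyck E \<and> length E = 2 * Suc m"
    using nth by (auto simp: All_less_Suc)
  have "(\<forall>i. i + 1 < Suc m \<longrightarrow> shape_step ((c @ [E]) ! i) ((c @ [E]) ! (i + 1))) \<longleftrightarrow>
      (\<forall>i. i + 1 < m \<longrightarrow> shape_step (c ! i) (c ! (i + 1))) \<and> (c \<noteq> [] \<longrightarrow> shape_step (last c) E)"
    (is "?L \<longleftrightarrow> ?R")
  proof
    assume L: ?L
    have "shape_step (c ! i) (c ! (i + 1))" if "i + 1 < m" for i
      using L[rule_format, of i] nth[of i] nth[of "i + 1"] that by simp
    moreover have "shape_step (last c) E" if "c \<noteq> []"
    proof -
      have "0 < m" using that True by (cases c) auto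
      then show ?thesis
        using L[rule_format, of "m - 1"] nth[of "m - 1"] nth[of m] True that by (simp add: last_conv_nth)
    qed
    ultimately show ?R by blast
  next
    assume R: ?R
    have "shape_step ((c @ [E]) ! i) ((c @ [E]) ! (i + 1))" if i: "i + 1 < Suc m" for i
    proof (cases "i + 1 < m")
      case True
      then show ?thesis using R nth[of i] nth[of "i + 1"] by simp
    next
      case False
      then have "i = m - 1" "c \<noteq> []" using i \<open>length c = m\<close> by auto
      then show ?thesis using R nth[of i] nth[of "i + 1"] i \<open>length c = m\<close> by (simp add: last_conv_nth)
    qed
    then show ?L by blast
  qed
  then show ?thesis using True shapes by (auto simp: chains_def)
next
  case False
  then show ?thesis by (auto simp: chains_def)
qed

lemma dyck_last_chain: "Ds \<in> chains n \<Longrightarrow> Ds \<noteq> [] \<Longrightarrow> dyck (last Ds)"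
  by (cases n) (auto simp: chains_def last_conv_nth)

lemma snoc_profile_chain_in_chains_iff:
  assumes \<tau>: "\<tau> \<in> perms m" and chain: "profile_chain \<tau> \<in> chains m"
  shows "profile_chain \<tau> @ [E] \<in> chains (Suc m) \<longleftrightarrow> E \<in> grow_at (profile \<tau>) ` raised_step \<tau> ` {..m}"
proof -
  have "dyck (profile \<tau>)"
    using dyck_last_chain[OF chain] last_profile_chain[of \<tau>] dyck_Nil by (cases "\<tau> = []") auto
  moreover have "profile_chain \<tau> @ [E] \<in> chains (Suc m) \<longleftrightarrow> dyck E \<and> shape_step (profile \<tau>) E"
  proof (cases "\<tau> = []")
    case True
    then have "m = 0" using perms_length[OF \<tau>] by simp
    have "shape_step [] [Up, Dn]"
      using shape_step_grow_at[OF dyck_Nil, of 0] by (simp add: grow_at_def down_steps_def)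
    have "[E] \<in> chains (Suc 0) \<longleftrightarrow> dyck E \<and> length E = 2"
      using snoc_in_chains_iff[of "[]" E 0] by (simp add: chains_0)
    also have "\<dots> \<longleftrightarrow> dyck E \<and> shape_step [] E"
      using \<open>shape_step [] [Up, Dn]\<close> dyck_length_2[of E] by (auto simp: shape_step_def)
    finally show ?thesis using True \<open>m = 0\<close> by (simp add: profile_chain_def)
  next
    case False
    then show ?thesis
      using snoc_in_chains_iff[of "profile_chain \<tau>" E m] chain last_profile_chain[OF False]
        perms_length[OF \<tau>] by (auto simp: shape_step_def)
  qed
  ultimately show ?thesis using dyck_shape_step_iff raised_step_image[OF \<tau>] by simp
qed

definition extend_chain :: "nat list \<Rightarrow> nat \<Rightarrow> step list list" where
  "extend_chain \<tau> k = profile_chain \<tau> @ [grow_at (profile \<tau>) (raised_step \<tau> k)]"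

lemma profile_chain_insert_at_eq_extend_chain:
  "\<tau> \<in> perms m \<Longrightarrow> k \<le> m \<Longrightarrow> profile_chain (insert_at k (Suc m) \<tau>) = extend_chain \<tau> k"
  by (simp add: extend_chain_def profile_chain_insert_at profile_insert_at)

lemma inj_on_extend_chain:
  assumes "inj_on profile_chain (perms m)"
  shows "inj_on (\<lambda>(\<tau>, k). extend_chain \<tau> k) (perms m \<times> {..m})"
proof (rule inj_onI, clarify)
  fix \<tau> k \<tau>' k' assume \<tau>: "\<tau> \<in> perms m" "k \<le> m" and \<tau>': "\<tau>' \<in> perms m" "k' \<le> m"
    and eq: "extend_chain \<tau> k = extend_chain \<tau>' k'"
  then have "\<tau> = \<tau>'" using assms by (auto simp: extend_chain_def dest: inj_onD)
  moreover have "raised_step \<tau> k = raised_step \<tau> k'"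
    using inj_on_grow_at[of "profile \<tau>"] eq raised_step_image[OF \<tau>(1)] \<tau> \<tau>' \<open>\<tau> = \<tau>'\<close>
    by (auto simp: extend_chain_def dest: inj_onD)
  then have "k = k'" using inj_on_raised_step[OF \<tau>(1)] \<tau> \<tau>' by (auto dest: inj_onD)
  ultimately show "\<tau> = \<tau>' \<and> k = k'" by simp
qed

lemma extend_chain_image:
  assumes "profile_chain ` perms m = chains m"
  shows "(\<lambda>(\<tau>, k). extend_chain \<tau> k) ` (perms m \<times> {..m}) = chains (Suc m)"
proof (intro equalityI subsetI)
  fix Ds assume "Ds \<in> (\<lambda>(\<tau>, k). extend_chain \<tau> k) ` (perms m \<times> {..m})"
  then obtain \<tau> k where \<tau>: "\<tau> \<in> perms m" and "k \<le> m" and Ds: "Ds = extend_chain \<tau> k" by auto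
  have "grow_at (profile \<tau>) (raised_step \<tau> k) \<in> grow_at (profile \<tau>) ` raised_step \<tau> ` {..m}"
    using \<open>k \<le> m\<close> by (intro imageI) simp
  then show "Ds \<in> chains (Suc m)"
    using snoc_profile_chain_in_chains_iff[OF \<tau>] assms \<tau> by (auto simp: Ds extend_chain_def)
next
  fix Ds assume Ds: "Ds \<in> chains (Suc m)"
  then have "Ds \<noteq> []" by (auto simp: chains_def)
  then obtain c E where cE: "Ds = c @ [E]" by (cases Ds rule: rev_cases) auto
  then have "c \<in> chains m" using Ds snoc_in_chains_iff by simp
  then obtain \<tau> where \<tau>: "\<tau> \<in> perms m" "c = profile_chain \<tau>" using assms by auto
  then have "E \<in> grow_at (profile \<tau>) ` raised_step \<tau> ` {..m}"
    using snoc_profile_chain_in_chains_iff[OF \<tau>(1), of E] \<open>c \<in> chains m\<close> Ds cE by simp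
  then obtain k where "k \<le> m" "E = grow_at (profile \<tau>) (raised_step \<tau> k)" by auto
  then have "Ds = extend_chain \<tau> k" using \<tau>(2) cE by (simp add: extend_chain_def)
  then show "Ds \<in> (\<lambda>(\<tau>, k). extend_chain \<tau> k) ` (perms m \<times> {..m})" using \<tau>(1) \<open>k \<le> m\<close> by force
qed

lemma bij_betw_profile_chain_Suc:
  assumes "bij_betw profile_chain (perms m) (chains m)"
  shows "bij_betw profile_chain (perms (Suc m)) (chains (Suc m))"
proof -
  have "bij_betw (\<lambda>(\<tau>, k). extend_chain \<tau> k) (perms m \<times> {..m}) (chains (Suc m))"
    using assms inj_on_extend_chain extend_chain_image by (simp add: bij_betw_def)
  moreover have "bij_betw (profile_chain \<circ> (\<lambda>(\<tau>, k). insert_at k (Suc m) \<tau>)) (perms m \<times> {..m}) (chains (Suc m))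
      \<longleftrightarrow> bij_betw (\<lambda>(\<tau>, k). extend_chain \<tau> k) (perms m \<times> {..m}) (chains (Suc m))"
    by (rule bij_betw_cong) (auto simp: profile_chain_insert_at_eq_extend_chain)
  ultimately show ?thesis
    using bij_betw_comp_iff[OF bij_betw_insert_at] by blast
qed

theorem bij_betw_profile_chain: "bij_betw profile_chain (perms n) (chains n)"
proof (induction n)
  case 0
  show ?case by (simp add: perms_0 chains_0 bij_betw_def profile_chain_def)
next
  case (Suc m)
  then show ?case by (rule bij_betw_profile_chain_Suc)
qed

theorem mainTheorem7:
  fixes n :: nat
  assumes "n \<ge> 1"
  shows "bij_betw profile_chain (perms n) (chains n)"
  by (rule bij_betw_profile_chain)

end
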